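(* Let Assumption (W) hold, let $S\subseteq\mathbb R^2$ be bounded and open, and let $(y_h,n_h)\subseteq H^1(\Omega;\mathbb R^3)\times H^1(\Omega_{top};\mathbb S^2)$ satisfy $\limsup_{h\to0}\mathcal E_h(y_h,n_h)<\infty$. Let $1<p<2$ be defined by $q_W=\frac{4p}{2-p}$. Then $\limsup_{h\to0}\frac1{h^2}\int_\Omega\mathrm{dist}^2(\nabla_hy_h,SO(3))<\infty$, $\limsup_{h\to0}\int_\Omega|\nabla_hy_h|^{q_W}+|\det\nabla_hy_h|^{-q_W/2}<\infty$, $\limsup_{h\to0}\int_{\Omega_{top}}|\nabla_hn_h(\nabla_hy_h)^{-1}|^2|\det\nabla_hy_h|<\infty$, and $\limsup_{h\to0}\int_{\Omega_{top}}|\nabla_hn_h|^p<\infty$. Moreover, there is $\bar h>0$ (depending on the sequence) such that $\det\nabla_hy_h>0$ a.e. in $\Omega$ for all $0<h\le\bar h$.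
   Context: $\Omega:=S\times(-\frac12,\frac12)$, $\Omega_{top}:=S\times(0,\frac12)$; $x=(x',x_3)$; $\nabla_h:=(\partial_1,\partial_2,\frac1h\partial_3)$; $\mathbb S^2$ the unit sphere. Assumption (W): there are $C_W>0$, $q_W>4$ and a monotone $r_W:[0,\infty)\to[0,\infty]$ with $r_W(\delta)\to0$ as $\delta\to0$, and $W:(-\frac12,\frac12)\times\mathbb R^{3\times3}\to[0,\infty]$ Borel with, for all $x_3$: (W1) $W(x_3,RF)=W(x_3,F)$ for $R\in SO(3)$; (W2) $W(x_3,F)\ge C_W^{-1}\mathrm{dist}^2(F,SO(3))$, and $W(x_3,F)\le C_W\mathrm{dist}^2(F,SO(3))$ whenever $\mathrm{dist}^2(F,SO(3))\le1/C_W$; (W3) a quadratic form $Q(x_3,\cdot)$ with $|W(x_3,I+G)-Q(x_3,G)|\le|G|^2r_W(|G|)$; (W4) $W(x_3,F)\ge C_W^{-1}\max\{|F|^{q_W},(\det F)^{-q_W/2}\}-C_W$ if $\det F>0$, $W=+\infty$ if $\det F\le0$. 3d energy: fix $\bar\varepsilon>0$, $\bar r\in\mathbb R$; for $h>0$ with $|h\bar r|<1$, $r_h:=1+h\bar r$, $L_h(n):=r_h^{-1/3}(I+(r_h-1)n\otimes n)$ for $n\in\mathbb S^2$, and $\mathcal E_h(y,n):=\frac1{h^2}\int_{\Omega\setminus\Omega_{top}}W(x_3,\nabla_hy)dx+\frac1{h^2}\int_{\Omega_{top}}W(x_3,L_h(n)^{-1/2}\nabla_hy)dx+\bar\varepsilon^2\int_{\Omega_{top}}|\nabla_hn(\nabla_hy)^{-1}|^2\det(\nabla_hy)dx$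 ($+\infty$ if $\det\nabla_hy\le0$ on a set of positive measure). *)

theory Defs
  imports "HOL-Analysis.Analysis"
begin

definition Omega :: "(real^2) set \<Rightarrow> (real^3) set" where
  "Omega S = {x. vector [x$1, x$2] \<in> S \<and> -1/2 < x$3 \<and> x$3 < 1/2}"

definition Omega_top :: "(real^2) set \<Rightarrow> (real^3) set" where
  "Omega_top S = {x. vector [x$1, x$2] \<in> S \<and> 0 < x$3 \<and> x$3 < 1/2}"

definition partial :: "(real^3 \<Rightarrow> real) \<Rightarrow> 3 \<Rightarrow> real^3 \<Rightarrow> real" where
  "partial f j x = frechet_derivative f (at x) (axis j 1)"

fun Ck :: "nat \<Rightarrow> (real^3 \<Rightarrow> real) \<Rightarrow> bool" where
  "Ck 0 f = continuous_on UNIV f"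
| "Ck (Suc k) f = (f differentiable_on UNIV \<and> (\<forall>j. Ck k (partial f j)))"

definition smooth :: "(real^3 \<Rightarrow> real) \<Rightarrow> bool" where
  "smooth f = (\<forall>k. Ck k f)"

definition test_function :: "(real^3) set \<Rightarrow> (real^3 \<Rightarrow> real) \<Rightarrow> bool" where
  "test_function U \<phi> = (smooth \<phi> \<and> compact (closure {x. \<phi> x \<noteq> 0})
                         \<and> closure {x. \<phi> x \<noteq> 0} \<subseteq> U)"

definition L2_on :: "(real^3) set \<Rightarrow> (real^3 \<Rightarrow> 'b::real_normed_vector) \<Rightarrow> bool" where
  "L2_on U f = (f \<in> borel_measurable (lebesgue_on U) \<and>
                (\<integral>\<^sup>+x\<in>U. ennreal ((norm (f x))\<^sup>2) \<partial>lebesgue) < \<infinity>)"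

text \<open>Convention: G x $ i $ j is the weak derivative of the i-th component w.r.t. x_j.\<close>
definition has_weak_gradient :: "(real^3) set \<Rightarrow> (real^3 \<Rightarrow> real^3) \<Rightarrow> (real^3 \<Rightarrow> real^3^3) \<Rightarrow> bool" where
  "has_weak_gradient U y G = (\<forall>\<phi>. test_function U \<phi> \<longrightarrow> (\<forall>i j.
      integral\<^sup>L (lebesgue_on U) (\<lambda>x. y x $ i * partial \<phi> j x)
      = - integral\<^sup>L (lebesgue_on U) (\<lambda>x. G x $ i $ j * \<phi> x)))"

definition H1 :: "(real^3) set \<Rightarrow> (real^3 \<Rightarrow> real^3) \<Rightarrow> (real^3 \<Rightarrow> real^3^3) \<Rightarrow> bool" where
  "H1 U y G = (L2_on U y \<and> L2_on U G \<and> has_weak_gradient U y G)"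

definition SO3 :: "(real^3^3) set" where
  "SO3 = {R. orthogonal_matrix R \<and> det R = 1}"

definition dist_SO3 :: "real^3^3 \<Rightarrow> real" where
  "dist_SO3 F = infdist F SO3"

text \<open>Scaled gradient: third column divided by h (norm on real^3^3 is the Frobenius norm).\<close>
definition nabla_h :: "real \<Rightarrow> real^3^3 \<Rightarrow> real^3^3" where
  "nabla_h h G = (\<chi> i j. if j = 3 then G $ i $ j / h else G $ i $ j)"

definition sym_pos_def :: "real^3^3 \<Rightarrow> bool" where
  "sym_pos_def M = (transpose M = M \<and> (\<forall>v. v \<noteq> 0 \<longrightarrow> 0 < v \<bullet> (M *v v)))"

definition inv_sqrt :: "real^3^3 \<Rightarrow> real^3^3" where
  "inv_sqrt A = (THE M. sym_pos_def M \<and> M ** M = matrix_inv A)"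

definition outer :: "real^3 \<Rightarrow> real^3 \<Rightarrow> real^3^3" where
  "outer a b = (\<chi> i j. a $ i * b $ j)"

definition r_h :: "real \<Rightarrow> real \<Rightarrow> real" where
  "r_h rbar h = 1 + h * rbar"

definition L_h :: "real \<Rightarrow> real \<Rightarrow> real^3 \<Rightarrow> real^3^3" where
  "L_h rbar h n = (r_h rbar h powr (-1/3)) *\<^sub>R (mat 1 + (r_h rbar h - 1) *\<^sub>R outer n n)"

definition quadratic_form :: "(real^3^3 \<Rightarrow> real) \<Rightarrow> bool" where
  "quadratic_form Q = (\<exists>B. bilinear B \<and> (\<forall>G. Q G = B G G))"

definition assumption_W ::
  "real \<Rightarrow> real \<Rightarrow> (real \<Rightarrow> ereal) \<Rightarrow> (real \<Rightarrow> real^3^3 \<Rightarrow> ennreal) \<Rightarrow> bool" where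
  "assumption_W C_W q_W r_W W =
    (C_W > 0 \<and> q_W > 4 \<and> mono_on {0..} r_W \<and> (r_W \<longlongrightarrow> 0) (at_right 0) \<and>
     (\<lambda>(t, F). W t F) \<in> borel_measurable (restrict_space borel ({-1/2<..<1/2} \<times> UNIV)) \<and>
     (\<forall>t. -1/2 < t \<and> t < 1/2 \<longrightarrow>
        (\<forall>R\<in>SO3. \<forall>F. W t (R ** F) = W t F) \<and>
        (\<forall>F. ennreal (inverse C_W * (dist_SO3 F)\<^sup>2) \<le> W t F) \<and>
        (\<forall>F. (dist_SO3 F)\<^sup>2 \<le> inverse C_W \<longrightarrow> W t F \<le> ennreal (C_W * (dist_SO3 F)\<^sup>2)) \<and>
        (\<exists>Q. quadratic_form Q \<and>
           (\<forall>G. \<bar>enn2ereal (W t (mat 1 + G)) - ereal (Q G)\<bar> \<le> ereal ((norm G)\<^sup>2) * r_W (norm G))) \<and>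
        (\<forall>F. det F > 0 \<longrightarrow>
           ereal (inverse C_W * max (norm F powr q_W) (det F powr (- q_W / 2)) - C_W)
             \<le> enn2ereal (W t F)) \<and>
        (\<forall>F. det F \<le> 0 \<longrightarrow> W t F = \<infinity>)))"

text \<open>Gy, Gn are the (weak) gradients of y on Omega and of n on Omega_top.\<close>
definition energy ::
  "(real^2) set \<Rightarrow> (real \<Rightarrow> real^3^3 \<Rightarrow> ennreal) \<Rightarrow> real \<Rightarrow> real \<Rightarrow> real \<Rightarrow>
   (real^3 \<Rightarrow> real^3^3) \<Rightarrow> (real^3 \<Rightarrow> real^3) \<Rightarrow> (real^3 \<Rightarrow> real^3^3) \<Rightarrow> ennreal" where
  "energy S W epsbar rbar h Gy n Gn =
    (if emeasure lebesgue {x \<in> Omega S. det (nabla_h h (Gy x)) \<le> 0} > 0 then \<infinity>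
     else ennreal (1 / h\<^sup>2) * (\<integral>\<^sup>+x\<in>Omega S - Omega_top S. W (x$3) (nabla_h h (Gy x)) \<partial>lebesgue)
        + ennreal (1 / h\<^sup>2) * (\<integral>\<^sup>+x\<in>Omega_top S.
              W (x$3) (inv_sqrt (L_h rbar h (n x)) ** nabla_h h (Gy x)) \<partial>lebesgue)
        + ennreal (epsbar\<^sup>2) * (\<integral>\<^sup>+x\<in>Omega_top S.
              ennreal ((norm (nabla_h h (Gn x) ** matrix_inv (nabla_h h (Gy x))))\<^sup>2
                       * det (nabla_h h (Gy x))) \<partial>lebesgue))"

definition neg_pow :: "real \<Rightarrow> real \<Rightarrow> ennreal" where
  "neg_pow t a = (if t = 0 then \<infinity> else ennreal (\<bar>t\<bar> powr (- a)))"

end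

theory Submission
  imports Defs
begin

text \<open>On the top layer the stored energy is evaluated at M F with F = \<nabla>_h y and
  M = L_h(n)^(-1/2), below it at F itself. Since |n| = 1, M is an explicit unimodular matrix
  whose inverse is bounded and O(h)-close to the identity. Hence (W2) gives
  dist(F, SO(3))^2 \<le> C (W(M F) + h^2) and (W4) gives |F|^q + (det F)^(-q/2) \<le> C (W(M F) + 1);
  integrating bounds both by the energy. Finiteness of the energy forces det F > 0 a.e., the
  director term is part of the energy, and |\<nabla>_h n| \<le> |\<nabla>_h n F^(-1)| |F| together with Young's
  inequality, for the exponents matched by q = 4p/(2-p), controls the L^p norm of \<nabla>_h n.\<close>

section \<open>Frobenius norm and square roots of matrices\<close>

lemma norm_matrix_sq: "(norm (A::real^'n^'m))\<^sup>2 = (\<Sum>i\<in>UNIV. \<Sum>j\<in>UNIV. (A$i$j)\<^sup>2)"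
  unfolding power2_norm_eq_inner by (simp add: inner_vec_def power2_eq_square)

lemma norm_matrix_mult_le: "norm ((A::real^'n^'m) ** (B::real^'k^'n)) \<le> norm A * norm B"
proof -
  have "(norm (A ** B))\<^sup>2 = (\<Sum>i\<in>UNIV. \<Sum>k\<in>UNIV. (\<Sum>j\<in>UNIV. A$i$j * B$j$k)\<^sup>2)"
    by (simp add: norm_matrix_sq matrix_matrix_mult_def)
  also have "\<dots> \<le> (\<Sum>i\<in>UNIV. \<Sum>k\<in>UNIV. (\<Sum>j\<in>UNIV. (A$i$j)\<^sup>2) * (\<Sum>j\<in>UNIV. (B$j$k)\<^sup>2))"
    by (intro sum_mono Cauchy_Schwarz_ineq_sum)
  also have "\<dots> = (\<Sum>i\<in>UNIV. \<Sum>j\<in>UNIV. (A$i$j)\<^sup>2) * (\<Sum>k\<in>UNIV. \<Sum>j\<in>UNIV. (B$j$k)\<^sup>2)"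
    by (rule sum_product[symmetric])
  also have "(\<Sum>k\<in>UNIV. \<Sum>j\<in>UNIV. (B$j$k)\<^sup>2) = (\<Sum>j\<in>UNIV. \<Sum>k\<in>UNIV. (B$j$k)\<^sup>2)"
    by (rule sum.swap)
  also have "(\<Sum>i\<in>UNIV. \<Sum>j\<in>UNIV. (A$i$j)\<^sup>2) * \<dots> = (norm A * norm B)\<^sup>2"
    by (simp add: norm_matrix_sq power_mult_distrib)
  finally show ?thesis
    by (meson norm_ge_zero power2_le_imp_le zero_le_mult_iff)
qed

lemma norm_orthogonal_matrix:
  "orthogonal_matrix (R::real^'n^'n) \<Longrightarrow> norm R = sqrt CARD('n)"
proof -
  assume "orthogonal_matrix R"
  then have "transpose R ** R = mat 1" by (simp add: orthogonal_matrix)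
  moreover have "(norm R)\<^sup>2 = trace (transpose R ** R)"
    unfolding norm_matrix_sq trace_def matrix_matrix_mult_def transpose_def
    by (simp add: power2_eq_square) (rule sum.swap)
  ultimately show ?thesis by (simp add: trace_I real_sqrt_unique)
qed

lemma mat1_in_SO3: "mat 1 \<in> SO3"
  by (simp add: SO3_def orthogonal_matrix_id)

lemma norm_SO3_le: "R \<in> SO3 \<Longrightarrow> norm R \<le> 2"
proof -
  assume "R \<in> SO3"
  then have "norm R = sqrt 3" by (simp add: SO3_def norm_orthogonal_matrix)
  also have "sqrt 3 \<le> (2::real)" by (rule real_le_lsqrt) auto
  finally show ?thesis .
qed

lemma matrix_add_rdistrib: "((A::'a::semiring_1^'n^'m) + B) ** C = A ** C + B ** C"
  by (simp add: vec_eq_iff matrix_matrix_mult_def sum.distrib distrib_right)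

lemma matrix_diff_ldistrib: "(A::'a::ring_1^'n^'m) ** (B - C) = A ** B - A ** C"
  by (simp add: vec_eq_iff matrix_matrix_mult_def sum_subtractf algebra_simps)

lemma matrix_diff_rdistrib: "((A::'a::ring_1^'n^'m) - B) ** C = A ** C - B ** C"
  by (simp add: vec_eq_iff matrix_matrix_mult_def sum_subtractf algebra_simps)

lemma matrix_inv_eqI:
  fixes A B :: "'a::semiring_1^'n^'n"
  assumes "A ** B = mat 1" "B ** A = mat 1"
  shows "matrix_inv A = B"
proof -
  have "A ** matrix_inv A = mat 1 \<and> matrix_inv A ** A = mat 1"
    unfolding matrix_inv_def by (rule someI_ex) (use assms in blast)
  then have "matrix_inv A = (B ** A) ** matrix_inv A" using assms by simp
  also have "\<dots> = B" using \<open>A ** matrix_inv A = mat 1 \<and> _\<close> by (simp add: matrix_mul_assoc[symmetric])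
  finally show ?thesis .
qed

lemma matrix_inv_left: "invertible (A::'a::semiring_1^'n^'n) \<Longrightarrow> matrix_inv A ** A = mat 1"
  unfolding invertible_def matrix_inv_def by (rule someI2_ex) auto

lemma sym_entry: "transpose (A::'a::semiring_1^'n^'n) = A \<Longrightarrow> A$i$j = A$j$i"
  by (metis transpose_def vec_lambda_beta)

lemma trace_sym_mult_mult:
  fixes D M :: "real^'n^'n"
  assumes "transpose D = D"
  shows "trace (D ** (M ** D)) = (\<Sum>i\<in>UNIV. column i D \<bullet> (M *v column i D))"
proof -
  have s: "D$i$j = D$j$i" for i j using assms by (rule sym_entry)
  show ?thesis
    unfolding trace_def matrix_matrix_mult_def inner_vec_def matrix_vector_mult_def column_def
    by (simp add: sum_distrib_left sum_distrib_right mult_ac s)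
qed

text \<open>For D = M - N one gets M D + D N = 0, hence tr(D M D) + tr(D N D) = 0, a sum of the
  nonnegative quadratic forms of M and N evaluated at the columns of D.\<close>
lemma sym_pos_def_square_unique:
  fixes M N :: "real^3^3"
  assumes M: "sym_pos_def M" and N: "sym_pos_def N" and eq: "M ** M = N ** N"
  shows "M = N"
proof -
  define D where "D = M - N"
  have "transpose M = M" "transpose N = N" using M N by (auto simp: sym_pos_def_def)
  then have tD: "transpose D = D"
    unfolding D_def transpose_def vec_eq_iff using sym_entry by simp
  have "M ** D + D ** N = M ** M - N ** N"
    unfolding D_def by (simp add: vec_eq_iff matrix_matrix_mult_def sum_subtractf sum.distrib algebra_simps)
  then have "M ** D + D ** N = 0" using eq by simp
  then have "trace (D ** (M ** D + D ** N)) = 0" by (simp add: trace_def)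
  then have "trace (D ** (M ** D)) + trace ((D ** N) ** D) = 0"
    by (simp add: matrix_add_ldistrib trace_add trace_mul_sym[of "D ** N" D] matrix_mul_assoc)
  then have tr0: "trace (D ** (M ** D)) + trace (D ** (N ** D)) = 0"
    by (simp add: matrix_mul_assoc)
  have quad_nonneg: "0 \<le> v \<bullet> (A *v v)" if "sym_pos_def A" for A and v :: "real^3"
    using that by (metis inner_zero_left order_less_imp_le order_refl sym_pos_def_def)
  have "(\<Sum>i\<in>UNIV. column i D \<bullet> (M *v column i D)) = 0"
    using tr0 quad_nonneg[OF M] quad_nonneg[OF N] unfolding trace_sym_mult_mult[OF tD]
    by (metis (no_types, lifting) add_nonneg_eq_0_iff sum_nonneg)
  then have "column i D \<bullet> (M *v column i D) = 0" for i
    using sum_nonneg_eq_0_iff[of UNIV "\<lambda>i. column i D \<bullet> (M *v column i D)"] quad_nonneg[OF M]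
    by simp
  then have "column i D = 0" for i
    using M unfolding sym_pos_def_def by (metis less_irrefl)
  then have "D = 0" by (simp add: vec_eq_iff column_def)
  then show ?thesis unfolding D_def by simp
qed

lemma inv_sqrt_eqI:
  "sym_pos_def M \<Longrightarrow> M ** M = matrix_inv A \<Longrightarrow> inv_sqrt A = M"
  unfolding inv_sqrt_def by (rule the_equality) (auto intro: sym_pos_def_square_unique)

section \<open>Axial stretches and the inverse square root of L_h\<close>

text \<open>For unit n, axial_stretch s a n acts as s across n and as s * a along n, so products
  multiply both factors.\<close>
definition axial_stretch :: "real \<Rightarrow> real \<Rightarrow> real^3 \<Rightarrow> real^3^3" where
  "axial_stretch s a n = s *\<^sub>R (mat 1 + (a - 1) *\<^sub>R outer n n)"

lemma outer_idem: "norm (n::real^3) = 1 \<Longrightarrow> outer n n ** outer n n = outer n n"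
proof -
  assume "norm n = 1"
  then have "(\<Sum>j\<in>UNIV. n$j * n$j) = 1" by (simp add: norm_eq_1 inner_vec_def)
  then show ?thesis
    by (simp add: vec_eq_iff matrix_matrix_mult_def outer_def mult_ac flip: sum_distrib_left)
qed

lemma norm_outer: "norm (n::real^3) = 1 \<Longrightarrow> norm (outer n n) = 1"
proof -
  assume n: "norm n = 1"
  have "(norm (outer n n))\<^sup>2 = (\<Sum>i\<in>UNIV. (n$i)\<^sup>2) * (\<Sum>j\<in>UNIV. (n$j)\<^sup>2)"
    by (simp add: norm_matrix_sq outer_def power_mult_distrib sum_product)
  also have "(\<Sum>i\<in>UNIV. (n$i)\<^sup>2) = 1"
    using n unfolding norm_vec_def L2_set_def by simp
  finally show ?thesis using norm_ge_zero[of "outer n n"] by (simp add: power2_eq_1_iff)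
qed

lemma axial_stretch_mult:
  assumes "norm n = 1"
  shows "axial_stretch s a n ** axial_stretch t b n = axial_stretch (s * t) (a * b) n"
proof -
  have "(mat 1 + x *\<^sub>R outer n n) ** (mat 1 + y *\<^sub>R outer n n) = mat 1 + (x + y + x * y) *\<^sub>R outer n n"
    for x y
    by (simp add: matrix_add_ldistrib matrix_add_rdistrib matrix_scalar_ac outer_idem[OF assms]
        scalar_matrix_assoc[symmetric] algebra_simps)
  moreover have "(a - 1) + (b - 1) + (a - 1) * (b - 1) = a * b - 1"
    by (simp add: algebra_simps)
  ultimately show ?thesis
    unfolding axial_stretch_def
    by (metis (no_types) matrix_scalar_ac scalar_matrix_assoc mult.commute scaleR_scaleR)
qed

lemma axial_stretch_one [simp]: "axial_stretch 1 1 n = mat 1"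
  by (simp add: axial_stretch_def)

lemma det_axial_stretch: "norm n = 1 \<Longrightarrow> det (axial_stretch s a n) = s ^ 3 * a"
proof -
  assume "norm n = 1"
  then have "(n$1)\<^sup>2 + (n$2)\<^sup>2 + (n$3)\<^sup>2 = 1"
    unfolding norm_vec_def L2_set_def by (simp add: sum_3)
  then show ?thesis
    unfolding det_3 axial_stretch_def
    by (simp add: mat_def outer_def power2_eq_square power3_eq_cube) algebra
qed

lemma axial_stretch_sym_pos_def:
  assumes n: "norm n = 1" and s: "s > 0" and a: "a > 0"
  shows "sym_pos_def (axial_stretch s a n)"
  unfolding sym_pos_def_def
proof (intro conjI allI impI)
  show "transpose (axial_stretch s a n) = axial_stretch s a n"
    by (simp add: axial_stretch_def vec_eq_iff transpose_def mat_def outer_def mult.commute)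
next
  fix v :: "real^3" assume "v \<noteq> 0"
  have quad: "v \<bullet> (axial_stretch s a n *v v) = s * ((v \<bullet> v - (n \<bullet> v)\<^sup>2) + a * (n \<bullet> v)\<^sup>2)"
    by (simp add: axial_stretch_def outer_def inner_vec_def matrix_vector_mult_def mat_def sum_3
        power2_eq_square algebra_simps)
  have "(n \<bullet> v)\<^sup>2 \<le> v \<bullet> v"
    using Cauchy_Schwarz_ineq[of n v] n by (simp add: norm_eq_1)
  moreover have "v \<bullet> v > 0" using \<open>v \<noteq> 0\<close> by simp
  ultimately have "0 < (v \<bullet> v - (n \<bullet> v)\<^sup>2) + a * (n \<bullet> v)\<^sup>2"
    using a by (cases "(n \<bullet> v)\<^sup>2 = 0") (auto intro: add_nonneg_pos)
  then show "0 < v \<bullet> (axial_stretch s a n *v v)"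
    unfolding quad using s by simp
qed

lemma norm_axial_stretch_le:
  assumes "norm n = 1"
  shows "norm (axial_stretch s a n) \<le> \<bar>s\<bar> * (sqrt 3 + \<bar>a - 1\<bar>)"
    and "norm (axial_stretch s a n - mat 1) \<le> \<bar>s - 1\<bar> * sqrt 3 + \<bar>s\<bar> * \<bar>a - 1\<bar>"
proof -
  have I: "norm (mat 1 :: real^3^3) = sqrt 3"
    using mat1_in_SO3 by (simp add: SO3_def norm_orthogonal_matrix)
  have K: "norm (outer n n) = 1" by (rule norm_outer[OF assms])
  show "norm (axial_stretch s a n) \<le> \<bar>s\<bar> * (sqrt 3 + \<bar>a - 1\<bar>)"
    unfolding axial_stretch_def
    using norm_triangle_ineq[of "mat 1 :: real^3^3" "(a - 1) *\<^sub>R outer n n"] I K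
    by (simp add: mult_left_mono)
  have "axial_stretch s a n - mat 1 = (s - 1) *\<^sub>R mat 1 + (s * (a - 1)) *\<^sub>R outer n n"
    by (simp add: axial_stretch_def algebra_simps)
  then show "norm (axial_stretch s a n - mat 1) \<le> \<bar>s - 1\<bar> * sqrt 3 + \<bar>s\<bar> * \<bar>a - 1\<bar>"
    using norm_triangle_ineq[of "(s - 1) *\<^sub>R mat 1 :: real^3^3" "(s * (a - 1)) *\<^sub>R outer n n"] I K
    by (simp add: abs_mult)
qed

text \<open>L_h(n) is the axial stretch with scale r^(-1/3) and factor r, i.e. it has eigenvalues
  r^(2/3) along n and r^(-1/3) across n; taking inverse square roots of both gives scale
  r^(1/6) and factor r^(-1/2).\<close>
definition L_inv_sqrt :: "real \<Rightarrow> real^3 \<Rightarrow> real^3^3" where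
  "L_inv_sqrt r n = axial_stretch (r powr (1/6)) (r powr (-1/2)) n"

lemma L_h_eq_axial_stretch: "L_h rbar h n = axial_stretch (r_h rbar h powr (-1/3)) (r_h rbar h) n"
  by (simp add: L_h_def axial_stretch_def)

lemma inv_sqrt_L_h:
  assumes r: "r_h rbar h > 0" and n: "norm n = 1"
  shows "inv_sqrt (L_h rbar h n) = L_inv_sqrt (r_h rbar h) n"
proof (rule inv_sqrt_eqI)
  define r where "r = r_h rbar h"
  have "r > 0" using r by (simp add: r_def)
  then have "r powr (1/6) * r powr (1/6) * r powr (-1/3) = 1"
    and "r powr (-1/2) * r powr (-1/2) * r = 1"
    by (simp_all flip: powr_add)
  then have "L_inv_sqrt r n ** L_inv_sqrt r n ** L_h rbar h n = mat 1"
    and "L_h rbar h n ** (L_inv_sqrt r n ** L_inv_sqrt r n) = mat 1"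
    by (simp_all add: L_inv_sqrt_def L_h_eq_axial_stretch axial_stretch_mult n r_def mult_ac)
  then show "L_inv_sqrt (r_h rbar h) n ** L_inv_sqrt (r_h rbar h) n = matrix_inv (L_h rbar h n)"
    by (simp add: matrix_inv_eqI r_def)
  show "sym_pos_def (L_inv_sqrt (r_h rbar h) n)"
    unfolding L_inv_sqrt_def using r n by (simp add: axial_stretch_sym_pos_def)
qed

lemma powr_neg_sixth_near_one:
  fixes r :: real assumes "1/2 \<le> r" "r \<le> 3/2"
  shows "\<bar>r powr (-1/6) - 1\<bar> \<le> 2 * \<bar>r - 1\<bar>"
proof -
  have r: "r > 0" using assms by simp
  have "\<bar>r powr (-1/6) - 1\<bar> \<le> \<bar>r powr (-1) - 1\<bar>"
  proof (cases "r \<ge> 1")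
    case True
    then have "r powr (-1) \<le> r powr (-1/6)" "r powr (-1/6) \<le> r powr 0"
      by (intro powr_mono; simp)+
    then show ?thesis using r by simp
  next
    case False
    then have "r powr (-1/6) \<le> r powr (-1)" "r powr 0 \<le> r powr (-1/6)"
      using r by (intro powr_mono'; simp)+
    then show ?thesis using r by simp
  qed
  also have "\<bar>r powr (-1) - 1\<bar> = \<bar>r - 1\<bar> / r"
    using r by (simp add: powr_minus_divide field_simps abs_minus_commute)
  also have "\<dots> \<le> 2 * \<bar>r - 1\<bar>"
    using assms mult_left_mono[of 1 "2 * r" "\<bar>r - 1\<bar>"] by (simp add: divide_le_eq)
  finally show ?thesis .
qed

lemma sqrt_near_one:
  fixes r :: real assumes "0 \<le> r" shows "\<bar>sqrt r - 1\<bar> \<le> \<bar>r - 1\<bar>"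
proof -
  have "(sqrt r - 1) * (sqrt r + 1) = r - 1"
    using assms by (simp add: algebra_simps)
  then have "\<bar>r - 1\<bar> = \<bar>sqrt r - 1\<bar> * (sqrt r + 1)"
    by (metis abs_mult abs_of_nonneg add_nonneg_nonneg real_sqrt_ge_zero zero_le_one assms)
  moreover have "\<bar>sqrt r - 1\<bar> \<le> \<bar>sqrt r - 1\<bar> * (sqrt r + 1)"
    using assms by (simp add: mult_le_cancel_left1)
  ultimately show ?thesis by simp
qed

text \<open>The constant 6 bounds the inverse factors for all r \<in> [1/2, 3/2] at once.\<close>
definition unimodular_near_id :: "real \<Rightarrow> real^3^3 \<Rightarrow> bool" where
  "unimodular_near_id e M \<longleftrightarrow>
     det M = 1 \<and> (\<exists>Q. Q ** M = mat 1 \<and> norm Q \<le> 6 \<and> norm (Q - mat 1) \<le> e)"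

lemma unimodular_near_id_mat1: "0 \<le> e \<Longrightarrow> unimodular_near_id e (mat 1)"
  unfolding unimodular_near_id_def
  using norm_SO3_le[OF mat1_in_SO3] by (intro conjI exI[of _ "mat 1"]) auto

lemma unimodular_near_id_L_inv_sqrt:
  assumes r: "1/2 \<le> r" "r \<le> 3/2" and n: "norm n = 1"
  shows "unimodular_near_id (6 * \<bar>r - 1\<bar>) (L_inv_sqrt r n)"
  unfolding unimodular_near_id_def
proof (intro conjI exI)
  define Q where "Q = axial_stretch (r powr (-1/6)) (sqrt r) n"
  have r0: "r > 0" using r by simp
  show "det (L_inv_sqrt r n) = 1"
    using r0 by (simp add: L_inv_sqrt_def det_axial_stretch n power3_eq_cube flip: powr_add)
  have "r powr (-1/6) * r powr (1/6) = 1" "sqrt r * r powr (-1/2) = 1"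
    using r0 by (simp_all add: powr_half_sqrt[symmetric] flip: powr_add)
  then show "Q ** L_inv_sqrt r n = mat 1"
    by (simp add: Q_def L_inv_sqrt_def axial_stretch_mult n)
  have s: "\<bar>r powr (-1/6) - 1\<bar> \<le> 2 * \<bar>r - 1\<bar>" by (rule powr_neg_sixth_near_one[OF r])
  have a: "\<bar>sqrt r - 1\<bar> \<le> \<bar>r - 1\<bar>" by (rule sqrt_near_one) (use r0 in simp)
  have "\<bar>r - 1\<bar> \<le> 1/2" using r by linarith
  then have s2: "\<bar>r powr (-1/6)\<bar> \<le> 2" using s by simp
  have sqrt3: "sqrt 3 \<le> (2::real)" by (rule real_le_lsqrt) auto
  have "norm Q \<le> \<bar>r powr (-1/6)\<bar> * (sqrt 3 + \<bar>sqrt r - 1\<bar>)"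
    unfolding Q_def by (rule norm_axial_stretch_le(1)[OF n])
  also have "\<dots> \<le> 2 * (2 + 1)"
    using s2 sqrt3 a \<open>\<bar>r - 1\<bar> \<le> 1/2\<close> by (intro mult_mono add_mono) auto
  finally show "norm Q \<le> 6" by simp
  have "norm (Q - mat 1) \<le> \<bar>r powr (-1/6) - 1\<bar> * sqrt 3 + \<bar>r powr (-1/6)\<bar> * \<bar>sqrt r - 1\<bar>"
    unfolding Q_def by (rule norm_axial_stretch_le(2)[OF n])
  also have "\<dots> \<le> (2 * \<bar>r - 1\<bar>) * 2 + 2 * \<bar>r - 1\<bar>"
    using s s2 sqrt3 a by (intro add_mono mult_mono) auto
  finally show "norm (Q - mat 1) \<le> 6 * \<bar>r - 1\<bar>" by simp
qed

section \<open>Pointwise consequences of assumption (W)\<close>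

lemma dist_SO3_le_unimodular_near_id:
  assumes "unimodular_near_id e M"
  shows "dist_SO3 F \<le> 6 * dist_SO3 (M ** F) + 2 * e"
proof -
  obtain Q where QM: "Q ** M = mat 1" and Q: "norm Q \<le> 6" and QI: "norm (Q - mat 1) \<le> e"
    using assms unfolding unimodular_near_id_def by blast
  have "(dist_SO3 F - 2 * e) / 6 \<le> dist (M ** F) R" if R: "R \<in> SO3" for R
  proof -
    have "F - R = Q ** (M ** F - R) + (Q - mat 1) ** R"
      by (simp add: matrix_diff_ldistrib matrix_diff_rdistrib matrix_mul_assoc QM)
    then have "dist F R \<le> norm Q * norm (M ** F - R) + norm (Q - mat 1) * norm R"
      by (metis dist_norm norm_triangle_le add_mono norm_matrix_mult_le)
    also have "\<dots> \<le> 6 * dist (M ** F) R + e * 2"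
      using Q QI order_trans[OF norm_ge_zero QI] norm_SO3_le[OF R]
      by (intro add_mono mult_mono) (auto simp: dist_norm)
    finally show ?thesis
      using infdist_le[OF R, of F] unfolding dist_SO3_def by simp
  qed
  then have "(dist_SO3 F - 2 * e) / 6 \<le> (INF R\<in>SO3. dist (M ** F) R)"
    using mat1_in_SO3 by (intro cINF_greatest) blast+
  moreover have "infdist (M ** F) SO3 = (INF R\<in>SO3. dist (M ** F) R)"
    using mat1_in_SO3 by (intro infdist_notempty) blast
  ultimately show ?thesis by (simp add: dist_SO3_def)
qed

lemma dist_SO3_sq_le_unimodular_near_id:
  assumes "unimodular_near_id e M"
  shows "(dist_SO3 F)\<^sup>2 \<le> 72 * (dist_SO3 (M ** F))\<^sup>2 + 8 * e\<^sup>2"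
proof -
  have "(dist_SO3 F)\<^sup>2 \<le> (6 * dist_SO3 (M ** F) + 2 * e)\<^sup>2"
    using dist_SO3_le_unimodular_near_id[OF assms]
    by (intro power_mono) (auto simp: dist_SO3_def infdist_nonneg)
  also have "\<dots> \<le> 72 * (dist_SO3 (M ** F))\<^sup>2 + 8 * e\<^sup>2"
    using zero_le_power2[of "6 * dist_SO3 (M ** F) - 2 * e"]
    by (simp add: power2_eq_square algebra_simps)
  finally show ?thesis .
qed

lemma assumption_W_const:
  assumes "assumption_W C q rW W" shows "0 < C" "4 < q"
  using assms unfolding assumption_W_def by auto

lemma assumption_W_lower_bounds:
  assumes "assumption_W C q rW W" "-1/2 < t" "t < 1/2"
  shows "ennreal (inverse C * (dist_SO3 F)\<^sup>2) \<le> W t F"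
    and "det F > 0 \<Longrightarrow>
      ereal (inverse C * max (norm F powr q) (det F powr (- q / 2)) - C) \<le> enn2ereal (W t F)"
  using assms unfolding assumption_W_def by blast+

lemma dist_SO3_sq_le_W:
  assumes W: "assumption_W C q rW W" and t: "-1/2 < t" "t < 1/2"
  shows "ennreal ((dist_SO3 F)\<^sup>2) \<le> ennreal C * W t F"
proof -
  have C: "C > 0" by (rule assumption_W_const[OF W])
  have "ennreal ((dist_SO3 F)\<^sup>2) = ennreal C * ennreal (inverse C * (dist_SO3 F)\<^sup>2)"
    using C by (simp flip: ennreal_mult)
  also have "\<dots> \<le> ennreal C * W t F"
    by (intro mult_left_mono assumption_W_lower_bounds(1)[OF W t]) simp
  finally show ?thesis .
qed

lemma growth_le_W:
  assumes W: "assumption_W C q rW W" and t: "-1/2 < t" "t < 1/2" and F: "det F > 0"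
  shows "ennreal (max (norm F powr q) (det F powr (- q / 2))) \<le> ennreal C * (W t F + ennreal C)"
proof (cases "W t F")
  case (real w)
  have C: "C > 0" by (rule assumption_W_const[OF W])
  have "inverse C * max (norm F powr q) (det F powr (- q / 2)) - C \<le> w"
    using assumption_W_lower_bounds(2)[OF W t F] real by simp
  then have "max (norm F powr q) (det F powr (- q / 2)) \<le> C * (w + C)"
    using C by (simp add: field_simps)
  then show ?thesis
    using C real by (simp add: ennreal_leI flip: ennreal_mult ennreal_plus)
next
  case top
  then show ?thesis using assumption_W_const(1)[OF W] by (simp add: ennreal_mult_top)
qed

lemma dist_SO3_sq_le_W_factor:
  assumes W: "assumption_W C q rW W" and t: "-1/2 < t" "t < 1/2" and M: "unimodular_near_id e M"
  shows "ennreal ((dist_SO3 F)\<^sup>2) \<le> ennreal (72 * C) * W t (M ** F) + ennreal (8 * e\<^sup>2)"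
proof -
  have C: "C > 0" by (rule assumption_W_const[OF W])
  have "ennreal ((dist_SO3 F)\<^sup>2) \<le> ennreal (72 * (dist_SO3 (M ** F))\<^sup>2 + 8 * e\<^sup>2)"
    by (intro ennreal_leI dist_SO3_sq_le_unimodular_near_id[OF M])
  also have "\<dots> = ennreal 72 * ennreal ((dist_SO3 (M ** F))\<^sup>2) + ennreal (8 * e\<^sup>2)"
    by (simp add: ennreal_mult ennreal_plus)
  also have "\<dots> \<le> ennreal 72 * (ennreal C * W t (M ** F)) + ennreal (8 * e\<^sup>2)"
    by (intro add_mono mult_left_mono dist_SO3_sq_le_W[OF W t]) auto
  finally show ?thesis
    using C by (simp add: ennreal_mult mult.assoc)
qed

lemma growth_le_W_factor:
  assumes W: "assumption_W C q rW W" and t: "-1/2 < t" "t < 1/2"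
    and M: "unimodular_near_id e M" and F: "det F > 0"
  shows "ennreal (norm F powr q) + neg_pow (det F) (q / 2)
           \<le> ennreal ((6 powr q + 1) * C) * (W t (M ** F) + ennreal C)"
proof -
  obtain Q where QM: "Q ** M = mat 1" and Q: "norm Q \<le> 6" and dM: "det M = 1"
    using M unfolding unimodular_near_id_def by blast
  define G where "G = M ** F"
  define m where "m = max (norm G powr q) (det G powr (- q / 2))"
  have C: "C > 0" and q: "q > 4" using assumption_W_const[OF W] by auto
  have m0: "0 \<le> m" by (simp add: m_def le_max_iff_disj)
  have dG: "det G = det F" using dM by (simp add: G_def det_mul)
  have "F = Q ** G" by (simp add: G_def matrix_mul_assoc QM)
  then have "norm F \<le> 6 * norm G"
    using Q norm_matrix_mult_le[of Q G] by (metis mult_right_mono norm_ge_zero order_trans)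
  then have "norm F powr q \<le> (6 * norm G) powr q" using q by (intro powr_mono2) auto
  also have "\<dots> \<le> 6 powr q * m" by (simp add: m_def powr_mult)
  finally have "ennreal (norm F powr q) + neg_pow (det F) (q / 2) \<le> ennreal (6 powr q * m + m)"
    using F dG by (simp add: neg_pow_def m_def ennreal_leI add_mono flip: ennreal_plus)
  also have "\<dots> = ennreal (6 powr q + 1) * ennreal m"
    using m0 by (simp add: distrib_right ennreal_mult)
  also have "\<dots> \<le> ennreal (6 powr q + 1) * (ennreal C * (W t G + ennreal C))"
    unfolding m_def using F dG by (intro mult_left_mono growth_le_W[OF W t]) auto
  also have "\<dots> = ennreal ((6 powr q + 1) * C) * (W t G + ennreal C)"
    using C by (simp add: ennreal_mult mult.assoc)
  finally show ?thesis by (simp add: G_def)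
qed

text \<open>Young's inequality with exponents 2/p and 2/(2-p), then once more with exponents 2, 2; the
  choice q = 4p/(2-p) makes the powers of s cancel.\<close>
lemma powr_le_Young_split:
  fixes a b g p q s :: real
  assumes p: "1 < p" "p < 2" and q: "q = 4 * p / (2 - p)"
    and s: "s > 0" and a: "a \<ge> 0" and b: "b \<ge> 0" and g: "0 \<le> g" "g \<le> a * b"
  shows "g powr p \<le> a\<^sup>2 * s + (b powr q + s powr (- q / 2))"
proof (cases "a = 0 \<or> b = 0")
  case True
  then have "g = 0" using g by auto
  then show ?thesis using p s by (simp add: add_nonneg_nonneg)
next
  case False
  then have a0: "a > 0" and b0: "b > 0" using a b by auto
  have q2: "q * (2 - p) = 4 * p" using q p by (simp add: field_simps)
  define A where "A = a\<^sup>2 * s"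
  define B where "B = b powr (q/2) * s powr (- q / 4)"
  have A0: "A > 0" and B0: "B > 0" using a0 b0 s by (simp_all add: A_def B_def)
  have "A powr (p/2) = a powr p * s powr (p/2)"
    using a0 s by (simp add: A_def powr_mult powr_powr flip: powr_numeral)
  moreover have "B powr (1 - p/2) = b powr p * s powr (- p/2)"
  proof -
    have "q * (1 - p / 2) / 2 = p" "- (q * (1 - p / 2) / 4) = - (p / 2)"
      using q2 by (simp_all add: field_simps)
    then show ?thesis using b0 s by (simp add: B_def powr_mult powr_powr)
  qed
  ultimately have "A powr (p/2) * B powr (1 - p/2) = (a * b) powr p"
    using a0 b0 s by (simp add: powr_mult powr_add[symmetric] mult_ac)
  moreover have "g powr p \<le> (a * b) powr p" using g p by (intro powr_mono2) auto
  moreover have "A powr (p/2) * B powr (1 - p/2) \<le> (p/2) * A + (1 - p/2) * B"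
    using p A0 B0 by (intro Youngs_inequality_0) auto
  moreover have "(p/2) * A + (1 - p/2) * B \<le> A + B"
    using p A0 B0 by (intro add_mono mult_left_le_one_le) auto
  moreover have "B \<le> b powr q + s powr (- q / 2)"
  proof -
    have "(b powr q) powr (1/2) * (s powr (- q / 2)) powr (1/2) \<le> (1/2) * b powr q + (1/2) * s powr (- q / 2)"
      using b0 s by (intro Youngs_inequality_0) auto
    moreover have "(b powr q) powr (1/2) * (s powr (- q / 2)) powr (1/2) = B"
      using b0 s by (simp add: B_def powr_powr)
    moreover have "0 \<le> b powr q" "0 \<le> s powr (- q / 2)" by simp_all
    ultimately show ?thesis by linarith
  qed
  ultimately show ?thesis unfolding A_def by linarith
qed

lemma norm_powr_le_Young_split:
  fixes F G :: "real^3^3"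
  assumes p: "1 < p" "p < 2" and q: "q = 4 * p / (2 - p)" and F: "det F > 0"
  shows "ennreal (norm G powr p)
          \<le> ennreal ((norm (G ** matrix_inv F))\<^sup>2 * \<bar>det F\<bar>) + (ennreal (norm F powr q) + neg_pow (det F) (q/2))"
proof -
  have "G = (G ** matrix_inv F) ** F"
    using F matrix_inv_left[of F] by (simp add: invertible_det_nz matrix_mul_assoc[symmetric])
  then have "norm G \<le> norm (G ** matrix_inv F) * norm F" by (metis norm_matrix_mult_le)
  then have "norm G powr p \<le> (norm (G ** matrix_inv F))\<^sup>2 * det F + (norm F powr q + det F powr (- q / 2))"
    by (intro powr_le_Young_split[OF p q F]) auto
  then show ?thesis
    using F by (simp add: neg_pow_def ennreal_leI flip: ennreal_plus)
qed

lemma nn_integral_add_le: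
  assumes g: "g \<in> borel_measurable M"
  shows "(\<integral>\<^sup>+x. f x + g x \<partial>M) \<le> integral\<^sup>N M f + integral\<^sup>N M g"
  unfolding nn_integral_def[of M "\<lambda>x. f x + g x"]
proof (rule SUP_least)
  fix s assume "s \<in> {s. simple_function M s \<and> s \<le> (\<lambda>x. f x + g x)}"
  then have s: "simple_function M s" and le: "\<And>x. s x \<le> f x + g x" by (auto simp: le_fun_def)
  have sm: "s \<in> borel_measurable M" by (rule borel_measurable_simple_function[OF s])
  \<comment> \<open>split s into a part below g and a measurable part u below f\<close>
  define u where "u x = (if g x = top then 0 else s x - g x)" for x
  have um: "u \<in> borel_measurable M" unfolding u_def using sm g by measurable
  have su: "s x \<le> u x + g x" for x
    by (cases "g x = top") (auto simp: u_def diff_add_self_ennreal)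
  have uf: "u x \<le> f x" for x
    using le[of x] by (auto simp: u_def ennreal_minus_le_iff add.commute)
  have "integral\<^sup>S M s = integral\<^sup>N M s" by (rule nn_integral_eq_simple_integral[symmetric, OF s])
  also have "\<dots> \<le> (\<integral>\<^sup>+x. u x + g x \<partial>M)" by (intro nn_integral_mono su)
  also have "\<dots> = integral\<^sup>N M u + integral\<^sup>N M g" by (rule nn_integral_add[OF um g])
  also have "\<dots> \<le> integral\<^sup>N M f + integral\<^sup>N M g" by (intro add_mono nn_integral_mono uf) simp
  finally show "integral\<^sup>S M s \<le> integral\<^sup>N M f + integral\<^sup>N M g" .
qed

lemma nn_integral_le_affine:
  assumes w: "w \<in> borel_measurable M" and f: "AE x in M. f x \<le> a * w x + b"
  shows "integral\<^sup>N M f \<le> a * integral\<^sup>N M w + b * emeasure M (space M)"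
proof -
  have "integral\<^sup>N M f \<le> (\<integral>\<^sup>+x. a * w x + b \<partial>M)" by (rule nn_integral_mono_AE[OF f])
  also have "\<dots> = a * integral\<^sup>N M w + b * emeasure M (space M)"
    using w by (simp add: nn_integral_add nn_integral_cmult nn_integral_const mult.commute)
  finally show ?thesis .
qed

lemma set_nn_integral_split:
  assumes f: "f \<in> borel_measurable (restrict_space M A)" and A: "A \<in> sets M"
    and B: "B \<in> sets M" "B \<subseteq> A"
  shows "(\<integral>\<^sup>+x\<in>A. f x \<partial>M) = (\<integral>\<^sup>+x\<in>A - B. f x \<partial>M) + (\<integral>\<^sup>+x\<in>B. f x \<partial>M)"
proof -
  define g where "g x = f x * indicator A x" for x
  have g: "g \<in> borel_measurable M"
    unfolding g_def using f A by (simp add: borel_measurable_restrict_space_iff_ennreal)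
  have eq: "(\<integral>\<^sup>+x\<in>C. f x \<partial>M) = (\<integral>\<^sup>+x\<in>C. g x \<partial>M)" if "C \<subseteq> A" for C
    using that by (intro nn_integral_cong) (auto simp: g_def split: split_indicator)
  have "(\<integral>\<^sup>+x\<in>(A - B) \<union> B. g x \<partial>M) = (\<integral>\<^sup>+x\<in>A - B. g x \<partial>M) + (\<integral>\<^sup>+x\<in>B. g x \<partial>M)"
    using A B by (intro nn_integral_disjoint_pair g) auto
  moreover have "(A - B) \<union> B = A" using B by auto
  ultimately show ?thesis using B by (simp add: eq)
qed

lemma ennreal_mult_le_imp_le_divide:
  assumes "0 < a" "0 \<le> c" "ennreal a * x \<le> ennreal c"
  shows "x \<le> ennreal (c / a)"
proof -
  have "x = ennreal (1 / a) * (ennreal a * x)"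
    using assms(1) by (simp add: mult.assoc[symmetric] flip: ennreal_mult)
  also have "\<dots> \<le> ennreal (1 / a) * ennreal c" by (intro mult_left_mono assms(3)) simp
  also have "\<dots> = ennreal (c / a)" using assms(1,2) by (simp flip: ennreal_mult)
  finally show ?thesis .
qed

lemma Limsup_lt_top_eventually_bounded:
  assumes "Limsup F f < (\<infinity>::ennreal)"
  shows "\<exists>c\<ge>0. eventually (\<lambda>x. f x \<le> ennreal c) F"
proof (intro exI conjI)
  have "Limsup F f < ennreal (enn2real (Limsup F f) + 1)"
    using assms by (cases "Limsup F f") (auto simp: ennreal_lessI)
  then show "eventually (\<lambda>x. f x \<le> ennreal (enn2real (Limsup F f) + 1)) F"
    by (rule eventually_mono[OF Limsup_lessD]) auto
qed simp

lemma Limsup_lt_topI: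
  "eventually (\<lambda>x. f x \<le> B) F \<Longrightarrow> B < (\<infinity>::ennreal) \<Longrightarrow> Limsup F f < \<infinity>"
  using Limsup_bounded le_less_trans by blast

lemma eventually_at_right_0_imp_interval:
  "eventually P (at_right (0::real)) \<Longrightarrow> \<exists>b>0. \<forall>h. 0 < h \<and> h \<le> b \<longrightarrow> P h"
  unfolding eventually_at_right_field
  by (metis field_sum_of_halves half_gt_zero less_add_same_cancel1 order_le_less_trans)

lemma eventually_small_scale:
  "\<forall>\<^sub>F h in at_right (0::real). 0 < h \<and> h \<le> 1 \<and> \<bar>h * rbar\<bar> \<le> 1/2"
proof -
  have lim: "((\<lambda>h. \<bar>h * rbar\<bar>) \<longlongrightarrow> 0) (at_right 0)" "((\<lambda>h. h) \<longlongrightarrow> 0) (at_right (0::real))"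
    by (auto intro!: tendsto_eq_intros)
  have "\<forall>\<^sub>F h in at_right 0. \<bar>h * rbar\<bar> < 1/2" by (rule order_tendstoD(2)[OF lim(1)]) simp
  moreover have "\<forall>\<^sub>F h in at_right (0::real). h < 1" by (rule order_tendstoD(2)[OF lim(2)]) simp
  ultimately show ?thesis using eventually_at_right_less[of 0]
    by eventually_elim auto
qed

lemma Omega_top_subset: "Omega_top S \<subseteq> Omega S"
  by (auto simp: Omega_def Omega_top_def)

lemma continuous_on_horizontal_part: "continuous_on UNIV (\<lambda>x::real^3. vector [x$1, x$2] :: real^2)"
proof -
  have eq: "(vector [x$1, x$2] :: real^2) = (\<chi> i. if i = 1 then x$1 else x$2)" for x :: "real^3"
    by (simp add: vec_eq_iff forall_2)
  show ?thesis
    unfolding eq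
  proof (intro continuous_on_vec_lambda)
    fix i :: 2
    show "continuous_on UNIV (\<lambda>x::real^3. if i = 1 then x$1 else x$2)"
      by (cases "i = 1") (auto intro: continuous_on_component)
  qed
qed

lemma open_Omega: assumes "open S" shows "open (Omega S)"
proof -
  have "Omega S = (\<lambda>x. vector [x$1, x$2]) -` S \<inter> {x. -1/2 < x$3} \<inter> {x. x$3 < 1/2}"
    by (auto simp: Omega_def)
  also have "open \<dots>"
    by (intro open_Int open_vimage continuous_on_horizontal_part assms
        open_halfspace_component_lt_cart open_halfspace_component_gt_cart)
  finally show ?thesis .
qed

lemma open_Omega_top: assumes "open S" shows "open (Omega_top S)"
proof -
  have "Omega_top S = (\<lambda>x. vector [x$1, x$2]) -` S \<inter> {x. 0 < x$3} \<inter> {x. x$3 < 1/2}"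
    by (auto simp: Omega_top_def)
  also have "open \<dots>"
    by (intro open_Int open_vimage continuous_on_horizontal_part assms
        open_halfspace_component_lt_cart open_halfspace_component_gt_cart)
  finally show ?thesis .
qed

lemma sets_lebesgue_open: "open A \<Longrightarrow> A \<in> sets lebesgue"
  by (simp add: borel_open sets_completionI_sets)

lemma bounded_Omega: assumes "bounded S" shows "bounded (Omega S)"
proof -
  obtain B where B: "\<And>z. z \<in> S \<Longrightarrow> norm z \<le> B" using assms bounded_iff by blast
  have "norm x \<le> B + 1" if x: "x \<in> Omega S" for x :: "real^3"
  proof -
    have z: "vector [x$1, x$2] \<in> S" and x3: "\<bar>x$3\<bar> \<le> 1" using x by (auto simp: Omega_def)
    have "(norm x)\<^sup>2 = (norm (vector [x$1, x$2] :: real^2))\<^sup>2 + (x$3)\<^sup>2"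
      unfolding norm_vec_def L2_set_def by (simp add: sum_3 sum_2)
    also have "\<dots> \<le> (norm (vector [x$1, x$2] :: real^2) + 1)\<^sup>2"
    proof -
      have "a\<^sup>2 + t\<^sup>2 \<le> (a + 1)\<^sup>2" if "0 \<le> a" "t\<^sup>2 \<le> 1" for a t :: real
        using that by (simp add: power2_sum)
      then show ?thesis using x3 abs_le_square_iff[of "x$3" 1] by simp
    qed
    finally have "norm x \<le> norm (vector [x$1, x$2] :: real^2) + 1"
      by (rule power2_le_imp_le) simp
    then show ?thesis using B[OF z] by simp
  qed
  then show ?thesis unfolding bounded_iff by blast
qed

lemma emeasure_Omega_finite:
  "bounded S \<Longrightarrow> open S \<Longrightarrow> emeasure lebesgue (Omega S) < \<infinity>"
  using bounded_set_imp_lmeasurable[OF bounded_Omega sets_lebesgue_open[OF open_Omega]]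
  unfolding fmeasurable_def by (simp del: emeasure_completion)

lemma borel_measurable_lebesgue_on: "f \<in> borel_measurable borel \<Longrightarrow> f \<in> borel_measurable (lebesgue_on A)"
  by (intro measurable_restrict_space1 measurable_completion) simp

lemma borel_measurable_det: "(\<lambda>F::real^3^3. det F) \<in> borel_measurable borel"
  unfolding det_3 by (intro borel_measurable_continuous_onI continuous_intros)

lemma borel_measurable_nabla_h: "nabla_h h \<in> borel_measurable borel"
proof -
  have "linear (nabla_h h)"
    by (rule linearI) (simp_all add: nabla_h_def vec_eq_iff add_divide_distrib)
  then show ?thesis
    by (intro borel_measurable_continuous_onI linear_continuous_on linear_conv_bounded_linear[THEN iffD1])
qed

lemma borel_measurable_neg_pow: "(\<lambda>t. neg_pow t a) \<in> borel_measurable borel"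
  unfolding neg_pow_def by measurable

lemma borel_measurable_matrix_mult:
  fixes A B :: "'a \<Rightarrow> real^'n^'n"
  assumes "A \<in> borel_measurable M" "B \<in> borel_measurable M"
  shows "(\<lambda>x. A x ** B x) \<in> borel_measurable M"
proof -
  have "continuous_on UNIV (\<lambda>z::(real^'n^'n) \<times> (real^'n^'n). fst z ** snd z)"
    unfolding matrix_matrix_mult_def by (intro continuous_intros)
  moreover have "(\<lambda>x. (A x, B x)) \<in> borel_measurable M"
    unfolding borel_prod[symmetric] by (rule measurable_Pair[OF assms])
  ultimately show ?thesis
    by (subst measurable_compose[where f = "\<lambda>x. (A x, B x)" and g="\<lambda>z. fst z ** snd z", simplified])
      (auto intro: borel_measurable_continuous_onI)
qed

lemma borel_measurable_W_comp:
  fixes F :: "real^3 \<Rightarrow> real^3^3"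
  assumes W: "assumption_W C q rW W" and A: "A \<subseteq> Omega S"
    and F: "F \<in> borel_measurable (lebesgue_on A)"
  shows "(\<lambda>x. W (x$3) (F x)) \<in> borel_measurable (lebesgue_on A)"
proof -
  have Wm: "(\<lambda>(t, F). W t F) \<in> borel_measurable (restrict_space borel ({-1/2<..<1/2} \<times> UNIV))"
    using W unfolding assumption_W_def by blast
  have "(\<lambda>x::real^3. x$3) \<in> borel_measurable (lebesgue_on A)"
    by (intro borel_measurable_lebesgue_on borel_measurable_continuous_onI continuous_on_component
        continuous_on_id)
  then have "(\<lambda>x. (x$3, F x)) \<in> measurable (lebesgue_on A) borel"
    unfolding borel_prod[symmetric] by (rule measurable_Pair[OF _ F])
  then have "(\<lambda>x. (x$3, F x)) \<in> measurable (lebesgue_on A) (restrict_space borel ({-1/2<..<1/2} \<times> UNIV))"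
    by (rule measurable_restrict_space2[rotated]) (use A in \<open>auto simp: Omega_def\<close>)
  from measurable_compose[OF this Wm] show ?thesis by simp
qed

section \<open>Estimates at a fixed scale\<close>

text \<open>The matrix applied to the scaled gradient in the stored energy density: L_h(n)^(-1/2) on
  Omega_top, written as L_inv_sqrt (equal for unit n, and visibly continuous in n), and the
  identity below.\<close>
definition relax_factor :: "real \<Rightarrow> (real^2) set \<Rightarrow> (real^3 \<Rightarrow> real^3) \<Rightarrow> real^3 \<Rightarrow> real^3^3" where
  "relax_factor r S n x = (if x \<in> Omega_top S then L_inv_sqrt r (n x) else mat 1)"

lemma borel_measurable_relax_factor:
  assumes S: "open S" and n: "n \<in> borel_measurable (lebesgue_on (Omega_top S))"
  shows "relax_factor r S n \<in> borel_measurable (lebesgue_on A)"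
proof -
  let ?T = "Omega_top S"
  have T: "?T \<in> sets lebesgue" by (intro sets_lebesgue_open open_Omega_top S)
  have "(\<lambda>x. indicator ?T x *\<^sub>R n x) \<in> borel_measurable lebesgue"
    using n T by (simp add: borel_measurable_restrict_space_iff)
  moreover have "continuous_on UNIV (L_inv_sqrt r)"
    unfolding L_inv_sqrt_def axial_stretch_def outer_def by (intro continuous_intros)
  ultimately have "(\<lambda>x. L_inv_sqrt r (indicator ?T x *\<^sub>R n x)) \<in> borel_measurable lebesgue"
    by (rule measurable_compose[OF _ borel_measurable_continuous_onI])
  then have "(\<lambda>x. if x \<in> ?T then L_inv_sqrt r (indicator ?T x *\<^sub>R n x) else mat 1)
      \<in> borel_measurable lebesgue"
    by (rule measurable_If_set[OF _ measurable_const]) (use T in auto)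
  moreover have "(\<lambda>x. if x \<in> ?T then L_inv_sqrt r (indicator ?T x *\<^sub>R n x) else mat 1) = relax_factor r S n"
    by (auto simp: relax_factor_def fun_eq_iff)
  ultimately show ?thesis by (metis measurable_restrict_space1)
qed

lemma unimodular_near_id_relax_factor:
  assumes "1/2 \<le> r" "r \<le> 3/2" "x \<in> Omega_top S \<longrightarrow> norm (n x) = 1"
  shows "unimodular_near_id (6 * \<bar>r - 1\<bar>) (relax_factor r S n x)"
  using assms unimodular_near_id_mat1 unimodular_near_id_L_inv_sqrt
  by (auto simp: relax_factor_def)

lemma set_nn_integral_relax_factor:
  fixes G :: "real^3 \<Rightarrow> real^3^3" and n :: "real^3 \<Rightarrow> real^3"
  assumes W: "assumption_W C q rW W" and S: "open S" and r: "r_h rbar h > 0"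
    and G: "G \<in> borel_measurable (lebesgue_on (Omega S))"
    and n: "n \<in> borel_measurable (lebesgue_on (Omega_top S))"
    and unit: "AE x in lebesgue_on (Omega_top S). norm (n x) = 1"
  shows "(\<integral>\<^sup>+x\<in>Omega S. W (x$3) (relax_factor (r_h rbar h) S n x ** G x) \<partial>lebesgue)
       = (\<integral>\<^sup>+x\<in>Omega S - Omega_top S. W (x$3) (G x) \<partial>lebesgue)
         + (\<integral>\<^sup>+x\<in>Omega_top S. W (x$3) (inv_sqrt (L_h rbar h (n x)) ** G x) \<partial>lebesgue)"
proof -
  let ?w = "\<lambda>x. W (x$3) (relax_factor (r_h rbar h) S n x ** G x)"
  have O: "Omega S \<in> sets lebesgue" and T: "Omega_top S \<in> sets lebesgue"
    by (intro sets_lebesgue_open open_Omega open_Omega_top S)+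
  have "?w \<in> borel_measurable (lebesgue_on (Omega S))"
    by (intro borel_measurable_W_comp[OF W order_refl] borel_measurable_matrix_mult
        borel_measurable_relax_factor S n G)
  then have "(\<integral>\<^sup>+x\<in>Omega S. ?w x \<partial>lebesgue)
      = (\<integral>\<^sup>+x\<in>Omega S - Omega_top S. ?w x \<partial>lebesgue) + (\<integral>\<^sup>+x\<in>Omega_top S. ?w x \<partial>lebesgue)"
    by (intro set_nn_integral_split O T Omega_top_subset)
  also have "(\<integral>\<^sup>+x\<in>Omega S - Omega_top S. ?w x \<partial>lebesgue)
      = (\<integral>\<^sup>+x\<in>Omega S - Omega_top S. W (x$3) (G x) \<partial>lebesgue)"
    by (intro set_nn_integral_cong) (auto simp: relax_factor_def)
  also have "(\<integral>\<^sup>+x\<in>Omega_top S. ?w x \<partial>lebesgue)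
      = (\<integral>\<^sup>+x\<in>Omega_top S. W (x$3) (inv_sqrt (L_h rbar h (n x)) ** G x) \<partial>lebesgue)"
  proof (intro nn_integral_cong_AE)
    have "AE x in lebesgue. x \<in> Omega_top S \<longrightarrow> norm (n x) = 1"
      using unit T by (simp add: AE_restrict_space_iff)
    then show "AE x in lebesgue. ?w x * indicator (Omega_top S) x
        = W (x$3) (inv_sqrt (L_h rbar h (n x)) ** G x) * indicator (Omega_top S) x"
      by eventually_elim (auto simp: relax_factor_def inv_sqrt_L_h[OF r] split: split_indicator)
  qed
  finally show ?thesis .
qed

lemma energy_le_ennrealD:
  fixes G Gn :: "real^3 \<Rightarrow> real^3^3" and n :: "real^3 \<Rightarrow> real^3"
  assumes E: "energy S W epsbar rbar h G n Gn \<le> ennreal c" and S: "open S"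
    and G: "G \<in> borel_measurable (lebesgue_on (Omega S))"
  defines "T1 \<equiv> \<integral>\<^sup>+x\<in>Omega S - Omega_top S. W (x$3) (nabla_h h (G x)) \<partial>lebesgue"
    and "T2 \<equiv> \<integral>\<^sup>+x\<in>Omega_top S. W (x$3) (inv_sqrt (L_h rbar h (n x)) ** nabla_h h (G x)) \<partial>lebesgue"
    and "T3 \<equiv> \<integral>\<^sup>+x\<in>Omega_top S. ennreal ((norm (nabla_h h (Gn x) ** matrix_inv (nabla_h h (G x))))\<^sup>2
                 * det (nabla_h h (G x))) \<partial>lebesgue"
  shows "AE x in lebesgue. x \<in> Omega S \<longrightarrow> det (nabla_h h (G x)) > 0"
    and "ennreal (1 / h\<^sup>2) * (T1 + T2) \<le> ennreal c"
    and "ennreal (epsbar\<^sup>2) * T3 \<le> ennreal c"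
proof -
  define D where "D = {x \<in> Omega S. det (nabla_h h (G x)) \<le> 0}"
  have E_eq: "energy S W epsbar rbar h G n Gn = (if emeasure lebesgue D > 0 then \<infinity>
      else ennreal (1 / h\<^sup>2) * T1 + ennreal (1 / h\<^sup>2) * T2 + ennreal (epsbar\<^sup>2) * T3)"
    unfolding energy_def T1_def T2_def T3_def D_def ..
  have D0: "emeasure lebesgue D = 0"
  proof (rule ccontr)
    assume "emeasure lebesgue D \<noteq> 0"
    then have "energy S W epsbar rbar h G n Gn = \<infinity>" by (simp add: E_eq zero_less_iff_neq_zero)
    then show False using E by (simp add: top_unique)
  qed
  have O: "Omega S \<in> sets lebesgue" by (intro sets_lebesgue_open open_Omega S)
  have "(\<lambda>x. det (nabla_h h (G x))) \<in> borel_measurable (lebesgue_on (Omega S))"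
    by (intro measurable_compose[OF measurable_compose[OF G borel_measurable_nabla_h]]
        borel_measurable_det)
  then have "{x \<in> space (lebesgue_on (Omega S)). det (nabla_h h (G x)) \<le> 0} \<in> sets (lebesgue_on (Omega S))"
    by measurable
  then have "D \<in> null_sets lebesgue"
    using O D0 by (simp add: D_def sets_restrict_space_iff null_sets_def del: emeasure_completion)
  then have "AE x in lebesgue. x \<notin> D" by (rule AE_not_in)
  then show "AE x in lebesgue. x \<in> Omega S \<longrightarrow> det (nabla_h h (G x)) > 0"
    by eventually_elim (auto simp: D_def)
  have sum: "ennreal (1 / h\<^sup>2) * (T1 + T2) + ennreal (epsbar\<^sup>2) * T3 \<le> ennreal c"
    using E D0 by (simp add: E_eq distrib_left)
  show "ennreal (1 / h\<^sup>2) * (T1 + T2) \<le> ennreal c"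
    by (rule order_trans[OF add_increasing2[OF zero_le order_refl] sum])
  show "ennreal (epsbar\<^sup>2) * T3 \<le> ennreal c"
    by (rule order_trans[OF add_increasing[OF zero_le order_refl] sum])
qed

lemma relaxed_density_le_energy:
  fixes G Gn :: "real^3 \<Rightarrow> real^3^3" and n :: "real^3 \<Rightarrow> real^3"
  assumes W: "assumption_W C q rW W" and S: "open S" and h: "0 < h" "\<bar>h * rbar\<bar> \<le> 1/2"
    and G: "G \<in> borel_measurable (lebesgue_on (Omega S))"
    and n: "n \<in> borel_measurable (lebesgue_on (Omega_top S))"
    and unit: "AE x in lebesgue_on (Omega_top S). norm (n x) = 1"
    and E: "energy S W epsbar rbar h G n Gn \<le> ennreal c" and c: "0 \<le> c"
  defines "F \<equiv> \<lambda>x. nabla_h h (G x)" and "M \<equiv> relax_factor (r_h rbar h) S n"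
  shows "(\<lambda>x. W (x$3) (M x ** F x)) \<in> borel_measurable (lebesgue_on (Omega S))"
    and "(\<integral>\<^sup>+x\<in>Omega S. W (x$3) (M x ** F x) \<partial>lebesgue) \<le> ennreal (h\<^sup>2 * c)"
    and "AE x in lebesgue_on (Omega S). det (F x) > 0 \<and> unimodular_near_id (6 * \<bar>h * rbar\<bar>) (M x)"
proof -
  have F: "F \<in> borel_measurable (lebesgue_on (Omega S))"
    unfolding F_def by (rule measurable_compose[OF G borel_measurable_nabla_h])
  note energy = energy_le_ennrealD[OF E S G]
  have pos: "AE x in lebesgue. x \<in> Omega S \<longrightarrow> det (F x) > 0"
    using energy(1) by (simp add: F_def)
  have r: "1/2 \<le> r_h rbar h" "r_h rbar h \<le> 3/2" "\<bar>r_h rbar h - 1\<bar> = \<bar>h * rbar\<bar>"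
    using h(2) by (auto simp: r_h_def abs_le_iff)
  show "(\<lambda>x. W (x$3) (M x ** F x)) \<in> borel_measurable (lebesgue_on (Omega S))"
    unfolding M_def
    by (intro borel_measurable_W_comp[OF W order_refl] borel_measurable_matrix_mult
        borel_measurable_relax_factor S n F)
  have "r_h rbar h > 0" using r by simp
  then have "(\<integral>\<^sup>+x\<in>Omega S. W (x$3) (M x ** F x) \<partial>lebesgue)
      = (\<integral>\<^sup>+x\<in>Omega S - Omega_top S. W (x$3) (F x) \<partial>lebesgue)
        + (\<integral>\<^sup>+x\<in>Omega_top S. W (x$3) (inv_sqrt (L_h rbar h (n x)) ** F x) \<partial>lebesgue)"
    unfolding M_def by (rule set_nn_integral_relax_factor[OF W S _ F n unit])
  also have "\<dots> \<le> ennreal (c / (1 / h\<^sup>2))"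
    unfolding F_def using h by (intro ennreal_mult_le_imp_le_divide[OF _ c energy(2)]) simp
  finally show "(\<integral>\<^sup>+x\<in>Omega S. W (x$3) (M x ** F x) \<partial>lebesgue) \<le> ennreal (h\<^sup>2 * c)"
    by (simp add: mult.commute)
  have "AE x in lebesgue. x \<in> Omega_top S \<longrightarrow> norm (n x) = 1"
    using unit S by (simp add: AE_restrict_space_iff sets_lebesgue_open open_Omega_top)
  with pos have "AE x in lebesgue. x \<in> Omega S \<longrightarrow>
      det (F x) > 0 \<and> unimodular_near_id (6 * \<bar>h * rbar\<bar>) (M x)"
    by eventually_elim (metis M_def r unimodular_near_id_relax_factor)
  then show "AE x in lebesgue_on (Omega S). det (F x) > 0 \<and> unimodular_near_id (6 * \<bar>h * rbar\<bar>) (M x)"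
    using S by (simp add: AE_restrict_space_iff sets_lebesgue_open open_Omega del: AE_conj_iff)
qed

lemma dist_SO3_integral_le_relaxed:
  fixes F M :: "real^3 \<Rightarrow> real^3^3"
  assumes W: "assumption_W C q rW W" and S: "open S" and h: "0 < h" and c: "0 \<le> c"
    and w: "(\<lambda>x. W (x$3) (M x ** F x)) \<in> borel_measurable (lebesgue_on (Omega S))"
    and w_int: "(\<integral>\<^sup>+x\<in>Omega S. W (x$3) (M x ** F x) \<partial>lebesgue) \<le> ennreal (h\<^sup>2 * c)"
    and good: "AE x in lebesgue_on (Omega S). unimodular_near_id (6 * \<bar>h * rbar\<bar>) (M x)"
  defines "\<mu> \<equiv> emeasure lebesgue (Omega S)"
  shows "ennreal (1 / h\<^sup>2) * (\<integral>\<^sup>+x\<in>Omega S. ennreal ((dist_SO3 (F x))\<^sup>2) \<partial>lebesgue)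
           \<le> ennreal (72 * C * c) + ennreal (288 * rbar\<^sup>2) * \<mu>"
proof -
  let ?L = "lebesgue_on (Omega S)" and ?w = "\<lambda>x. W (x$3) (M x ** F x)"
  have O: "Omega S \<in> sets lebesgue" by (intro sets_lebesgue_open open_Omega S)
  have set_int: "(\<integral>\<^sup>+x\<in>Omega S. f x \<partial>lebesgue) = integral\<^sup>N ?L f" for f
    using O by (simp add: nn_integral_restrict_space)
  have C: "C > 0" by (rule assumption_W_const[OF W])
  have "integral\<^sup>N ?L (\<lambda>x. ennreal ((dist_SO3 (F x))\<^sup>2))
      \<le> ennreal (72 * C) * integral\<^sup>N ?L ?w + ennreal (288 * (h * rbar)\<^sup>2) * emeasure ?L (space ?L)"
  proof (intro nn_integral_le_affine w)
    have e: "8 * (6 * \<bar>h * rbar\<bar>)\<^sup>2 = 288 * (h * rbar)\<^sup>2" by (simp add: power_mult_distrib)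
    have pt: "ennreal ((dist_SO3 (F x))\<^sup>2) \<le> ennreal (72 * C) * ?w x + ennreal (288 * (h * rbar)\<^sup>2)"
      if "x \<in> Omega S" "unimodular_near_id (6 * \<bar>h * rbar\<bar>) (M x)" for x
      using dist_SO3_sq_le_W_factor[OF W _ _ that(2), of "x$3" "F x"] that(1)
      unfolding e by (simp add: Omega_def)
    show "AE x in ?L. ennreal ((dist_SO3 (F x))\<^sup>2) \<le> ennreal (72 * C) * ?w x + ennreal (288 * (h * rbar)\<^sup>2)"
      using good by (rule AE_mp[OF _ AE_I2]) (auto intro: pt)
  qed
  also have "\<dots> \<le> ennreal (72 * C) * ennreal (h\<^sup>2 * c) + ennreal (288 * (h * rbar)\<^sup>2) * \<mu>"
    using w_int O by (intro add_mono mult_left_mono) (auto simp: set_int \<mu>_def emeasure_restrict_space)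
  also have "\<dots> = ennreal (h\<^sup>2) * (ennreal (72 * C * c) + ennreal (288 * rbar\<^sup>2) * \<mu>)"
    using C c by (simp add: ennreal_mult power_mult_distrib distrib_left mult_ac)
  finally have "ennreal (1 / h\<^sup>2) * (\<integral>\<^sup>+x\<in>Omega S. ennreal ((dist_SO3 (F x))\<^sup>2) \<partial>lebesgue)
      \<le> ennreal (1 / h\<^sup>2) * ennreal (h\<^sup>2) * (ennreal (72 * C * c) + ennreal (288 * rbar\<^sup>2) * \<mu>)"
    unfolding set_int mult.assoc by (rule mult_left_mono) simp
  also have "ennreal (1 / h\<^sup>2) * ennreal (h\<^sup>2) = 1" using h by (simp flip: ennreal_mult)
  finally show ?thesis by simp
qed

lemma growth_integral_le_relaxed:
  fixes F M :: "real^3 \<Rightarrow> real^3^3"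
  assumes W: "assumption_W C q rW W" and S: "open S" and h: "0 < h" "h \<le> 1" and c: "0 \<le> c"
    and w: "(\<lambda>x. W (x$3) (M x ** F x)) \<in> borel_measurable (lebesgue_on (Omega S))"
    and w_int: "(\<integral>\<^sup>+x\<in>Omega S. W (x$3) (M x ** F x) \<partial>lebesgue) \<le> ennreal (h\<^sup>2 * c)"
    and good: "AE x in lebesgue_on (Omega S). det (F x) > 0 \<and> unimodular_near_id e (M x)"
  defines "\<mu> \<equiv> emeasure lebesgue (Omega S)" and "K \<equiv> (6 powr q + 1) * C"
  shows "(\<integral>\<^sup>+x\<in>Omega S. ennreal (norm (F x) powr q) + neg_pow (det (F x)) (q / 2) \<partial>lebesgue)
           \<le> ennreal K * (ennreal c + ennreal C * \<mu>)"
proof -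
  let ?L = "lebesgue_on (Omega S)" and ?w = "\<lambda>x. W (x$3) (M x ** F x)"
  have O: "Omega S \<in> sets lebesgue" by (intro sets_lebesgue_open open_Omega S)
  have set_int: "(\<integral>\<^sup>+x\<in>Omega S. f x \<partial>lebesgue) = integral\<^sup>N ?L f" for f
    using O by (simp add: nn_integral_restrict_space)
  have "integral\<^sup>N ?L (\<lambda>x. ennreal (norm (F x) powr q) + neg_pow (det (F x)) (q / 2))
      \<le> ennreal K * integral\<^sup>N ?L ?w + ennreal K * ennreal C * emeasure ?L (space ?L)"
  proof (intro nn_integral_le_affine w)
    have pt: "ennreal (norm (F x) powr q) + neg_pow (det (F x)) (q / 2) \<le> ennreal K * ?w x + ennreal K * ennreal C"
      if "x \<in> Omega S" "det (F x) > 0" "unimodular_near_id e (M x)" for x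
      using growth_le_W_factor[OF W _ _ that(3,2)] that(1) by (simp add: K_def Omega_def distrib_left)
    show "AE x in ?L. ennreal (norm (F x) powr q) + neg_pow (det (F x)) (q / 2)
        \<le> ennreal K * ?w x + ennreal K * ennreal C"
      using good by (rule AE_mp[OF _ AE_I2]) (auto intro: pt)
  qed
  also have "\<dots> \<le> ennreal K * ennreal c + ennreal K * ennreal C * \<mu>"
  proof -
    have "h\<^sup>2 * c \<le> c" using h c by (simp add: mult_left_le_one_le power_le_one)
    then have "integral\<^sup>N ?L ?w \<le> ennreal c" using w_int by (simp add: set_int order_trans ennreal_leI)
    then show ?thesis using O by (intro add_mono mult_left_mono) (auto simp: \<mu>_def emeasure_restrict_space)
  qed
  finally show ?thesis by (simp add: set_int distrib_left mult.assoc)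
qed

lemma director_gradient_bound:
  fixes F Gn :: "real^3 \<Rightarrow> real^3^3"
  assumes S: "open S" and p: "1 < p" "p < 2" "q = 4 * p / (2 - p)"
    and pos: "AE x in lebesgue. x \<in> Omega_top S \<longrightarrow> det (F x) > 0"
    and F: "F \<in> borel_measurable (lebesgue_on (Omega S))"
    and a: "(\<integral>\<^sup>+x\<in>Omega_top S. ennreal ((norm (Gn x ** matrix_inv (F x)))\<^sup>2 * \<bar>det (F x)\<bar>) \<partial>lebesgue) \<le> A"
    and b: "(\<integral>\<^sup>+x\<in>Omega S. ennreal (norm (F x) powr q) + neg_pow (det (F x)) (q / 2) \<partial>lebesgue) \<le> B"
  shows "(\<integral>\<^sup>+x\<in>Omega_top S. ennreal (norm (Gn x) powr p) \<partial>lebesgue) \<le> A + B"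
proof -
  let ?T = "lebesgue_on (Omega_top S)"
  define f where "f x = ennreal (norm (F x) powr q) + neg_pow (det (F x)) (q / 2)" for x
  have T: "Omega_top S \<in> sets lebesgue" by (intro sets_lebesgue_open open_Omega_top S)
  have set_int: "(\<integral>\<^sup>+x\<in>Omega_top S. g x \<partial>lebesgue) = integral\<^sup>N ?T g" for g
    using T by (simp add: nn_integral_restrict_space)
  have "f \<in> borel_measurable (lebesgue_on (Omega S))"
    unfolding f_def
    by (intro borel_measurable_add measurable_compose[OF F] measurable_compose[OF measurable_compose[OF F
        borel_measurable_det] borel_measurable_neg_pow]) measurable
  then have fT: "f \<in> borel_measurable ?T"
    by (rule measurable_restrict_mono[OF _ Omega_top_subset])
  have "integral\<^sup>N ?T (\<lambda>x. ennreal (norm (Gn x) powr p))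
      \<le> integral\<^sup>N ?T (\<lambda>x. ennreal ((norm (Gn x ** matrix_inv (F x)))\<^sup>2 * \<bar>det (F x)\<bar>) + f x)"
  proof (rule nn_integral_mono_AE)
    show "AE x in ?T. ennreal (norm (Gn x) powr p)
        \<le> ennreal ((norm (Gn x ** matrix_inv (F x)))\<^sup>2 * \<bar>det (F x)\<bar>) + f x"
      using pos T unfolding f_def
      by (simp add: AE_restrict_space_iff) (auto elim!: eventually_mono intro: norm_powr_le_Young_split[OF p])
  qed
  also have "\<dots> \<le> integral\<^sup>N ?T (\<lambda>x. ennreal ((norm (Gn x ** matrix_inv (F x)))\<^sup>2 * \<bar>det (F x)\<bar>))
      + integral\<^sup>N ?T f"
    by (rule nn_integral_add_le[OF fT])
  also have "\<dots> \<le> A + (\<integral>\<^sup>+x\<in>Omega_top S. f x \<partial>lebesgue)"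
    using a by (simp add: set_int add_right_mono)
  also have "(\<integral>\<^sup>+x\<in>Omega_top S. f x \<partial>lebesgue) \<le> (\<integral>\<^sup>+x\<in>Omega S. f x \<partial>lebesgue)"
    using Omega_top_subset by (intro nn_integral_mono) (auto split: split_indicator)
  finally show ?thesis
    using b unfolding f_def set_int by (simp add: add_left_mono order_trans)
qed

lemma estimates_at_scale:
  fixes G Gn :: "real^3 \<Rightarrow> real^3^3" and y n :: "real^3 \<Rightarrow> real^3"
  assumes W: "assumption_W C q rW W" and S: "open S"
    and h: "0 < h" "h \<le> 1" "\<bar>h * rbar\<bar> \<le> 1/2"
    and y: "H1 (Omega S) y G" and n: "H1 (Omega_top S) n Gn"
    and unit: "AE x in lebesgue_on (Omega_top S). norm (n x) = 1"
    and E: "energy S W epsbar rbar h G n Gn \<le> ennreal c" and c: "0 \<le> c" and eps: "epsbar > 0"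
    and p: "1 < p" "p < 2" "q = 4 * p / (2 - p)"
  defines "\<mu> \<equiv> emeasure lebesgue (Omega S)" and "K \<equiv> (6 powr q + 1) * C"
  shows "AE x in lebesgue_on (Omega S). det (nabla_h h (G x)) > 0"
    and "ennreal (1 / h\<^sup>2) * (\<integral>\<^sup>+x\<in>Omega S. ennreal ((dist_SO3 (nabla_h h (G x)))\<^sup>2) \<partial>lebesgue)
           \<le> ennreal (72 * C * c) + ennreal (288 * rbar\<^sup>2) * \<mu>"
    and "(\<integral>\<^sup>+x\<in>Omega S. ennreal (norm (nabla_h h (G x)) powr q)
           + neg_pow (det (nabla_h h (G x))) (q / 2) \<partial>lebesgue) \<le> ennreal K * (ennreal c + ennreal C * \<mu>)"
    and "(\<integral>\<^sup>+x\<in>Omega_top S. ennreal ((norm (nabla_h h (Gn x) ** matrix_inv (nabla_h h (G x))))\<^sup>2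
           * \<bar>det (nabla_h h (G x))\<bar>) \<partial>lebesgue) \<le> ennreal (c / epsbar\<^sup>2)"
    and "(\<integral>\<^sup>+x\<in>Omega_top S. ennreal (norm (nabla_h h (Gn x)) powr p) \<partial>lebesgue)
           \<le> ennreal (c / epsbar\<^sup>2) + ennreal K * (ennreal c + ennreal C * \<mu>)"
proof -
  have G: "G \<in> borel_measurable (lebesgue_on (Omega S))"
    and nm: "n \<in> borel_measurable (lebesgue_on (Omega_top S))"
    using y n by (simp_all add: H1_def L2_on_def)
  note energy = energy_le_ennrealD[OF E S G]
  note relaxed = relaxed_density_le_energy[OF W S h(1,3) G nm unit E c]
  show "AE x in lebesgue_on (Omega S). det (nabla_h h (G x)) > 0"
    using relaxed(3) by (rule AE_mp[OF _ AE_I2]) simp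
  show "ennreal (1 / h\<^sup>2) * (\<integral>\<^sup>+x\<in>Omega S. ennreal ((dist_SO3 (nabla_h h (G x)))\<^sup>2) \<partial>lebesgue)
      \<le> ennreal (72 * C * c) + ennreal (288 * rbar\<^sup>2) * \<mu>"
    unfolding \<mu>_def
    by (rule dist_SO3_integral_le_relaxed[OF W S h(1) c relaxed(1,2) AE_mp[OF relaxed(3) AE_I2]]) simp
  show growth: "(\<integral>\<^sup>+x\<in>Omega S. ennreal (norm (nabla_h h (G x)) powr q)
      + neg_pow (det (nabla_h h (G x))) (q / 2) \<partial>lebesgue) \<le> ennreal K * (ennreal c + ennreal C * \<mu>)"
    unfolding \<mu>_def K_def by (rule growth_integral_le_relaxed[OF W S h(1,2) c relaxed])
  have "(\<integral>\<^sup>+x\<in>Omega_top S. ennreal ((norm (nabla_h h (Gn x) ** matrix_inv (nabla_h h (G x))))\<^sup>2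
        * \<bar>det (nabla_h h (G x))\<bar>) \<partial>lebesgue)
      = (\<integral>\<^sup>+x\<in>Omega_top S. ennreal ((norm (nabla_h h (Gn x) ** matrix_inv (nabla_h h (G x))))\<^sup>2
        * det (nabla_h h (G x))) \<partial>lebesgue)"
    using energy(1) Omega_top_subset
    by (intro nn_integral_cong_AE) (auto elim!: eventually_mono split: split_indicator)
  also have "\<dots> \<le> ennreal (c / epsbar\<^sup>2)"
    using eps by (intro ennreal_mult_le_imp_le_divide[OF _ c energy(3)]) simp
  finally show director: "(\<integral>\<^sup>+x\<in>Omega_top S. ennreal ((norm (nabla_h h (Gn x) ** matrix_inv (nabla_h h (G x))))\<^sup>2
      * \<bar>det (nabla_h h (G x))\<bar>) \<partial>lebesgue) \<le> ennreal (c / epsbar\<^sup>2)" .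
  have "AE x in lebesgue. x \<in> Omega_top S \<longrightarrow> det (nabla_h h (G x)) > 0"
    using energy(1) Omega_top_subset by (auto elim!: eventually_mono)
  from director_gradient_bound[OF S p this measurable_compose[OF G borel_measurable_nabla_h] director growth]
  show "(\<integral>\<^sup>+x\<in>Omega_top S. ennreal (norm (nabla_h h (Gn x)) powr p) \<partial>lebesgue)
      \<le> ennreal (c / epsbar\<^sup>2) + ennreal K * (ennreal c + ennreal C * \<mu>)" .
qed

theorem lemma4p1:
  fixes C_W q_W p epsbar rbar :: real
    and r_W :: "real \<Rightarrow> ereal"
    and W :: "real \<Rightarrow> real^3^3 \<Rightarrow> ennreal"
    and S :: "(real^2) set"
    and y :: "real \<Rightarrow> real^3 \<Rightarrow> real^3" and Gy :: "real \<Rightarrow> real^3 \<Rightarrow> real^3^3"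
    and n :: "real \<Rightarrow> real^3 \<Rightarrow> real^3" and Gn :: "real \<Rightarrow> real^3 \<Rightarrow> real^3^3"
  assumes W: "assumption_W C_W q_W r_W W"
    and eps: "epsbar > 0"
    and S: "bounded S" "open S"
    and y: "\<And>h. h > 0 \<Longrightarrow> H1 (Omega S) (y h) (Gy h)"
    and n: "\<And>h. h > 0 \<Longrightarrow> H1 (Omega_top S) (n h) (Gn h)"
    and nS2: "\<And>h. h > 0 \<Longrightarrow> AE x in lebesgue_on (Omega_top S). norm (n h x) = 1"
    and bound: "Limsup (at_right 0) (\<lambda>h. energy S W epsbar rbar h (Gy h) (n h) (Gn h)) < \<infinity>"
    and p: "1 < p" "p < 2" "q_W = 4 * p / (2 - p)"
  shows "(Limsup (at_right 0) (\<lambda>h. ennreal (1 / h\<^sup>2) *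
            (\<integral>\<^sup>+x\<in>Omega S. ennreal ((dist_SO3 (nabla_h h (Gy h x)))\<^sup>2) \<partial>lebesgue)) < \<infinity>) \<and>
         (Limsup (at_right 0) (\<lambda>h.
            \<integral>\<^sup>+x\<in>Omega S. ennreal (norm (nabla_h h (Gy h x)) powr q_W)
                          + neg_pow (det (nabla_h h (Gy h x))) (q_W / 2) \<partial>lebesgue) < \<infinity>) \<and>
         (Limsup (at_right 0) (\<lambda>h.
            \<integral>\<^sup>+x\<in>Omega_top S. ennreal ((norm (nabla_h h (Gn h x) ** matrix_inv (nabla_h h (Gy h x))))\<^sup>2
                          * \<bar>det (nabla_h h (Gy h x))\<bar>) \<partial>lebesgue) < \<infinity>) \<and>
         (Limsup (at_right 0) (\<lambda>h.
            \<integral>\<^sup>+x\<in>Omega_top S. ennreal (norm (nabla_h h (Gn h x)) powr p) \<partial>lebesgue) < \<infinity>) \<and>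
         (\<exists>hbar > 0. \<forall>h. 0 < h \<and> h \<le> hbar \<longrightarrow>
            (AE x in lebesgue_on (Omega S). det (nabla_h h (Gy h x)) > 0))"
proof -
  obtain c where c: "0 \<le> c"
    and energy_le: "\<forall>\<^sub>F h in at_right 0. energy S W epsbar rbar h (Gy h) (n h) (Gn h) \<le> ennreal c"
    using Limsup_lt_top_eventually_bounded[OF bound] by blast
  define \<mu> where "\<mu> = emeasure lebesgue (Omega S)"
  define K where "K = (6 powr q_W + 1) * C_W"
  \<comment> \<open>B dominates all four scale-independent bounds provided by estimates_at_scale\<close>
  define B where "B = ennreal (72 * C_W * c) + ennreal (288 * rbar\<^sup>2) * \<mu>
                      + (ennreal (c / epsbar\<^sup>2) + ennreal K * (ennreal c + ennreal C_W * \<mu>))"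
  have "B < \<infinity>"
    using emeasure_Omega_finite[OF S] by (simp add: B_def \<mu>_def ennreal_mult_less_top)
  note est = estimates_at_scale[OF W S(2) _ _ _ y n nS2 _ c eps p, folded \<mu>_def K_def]
  have small: "\<forall>\<^sub>F h in at_right 0. 0 < h \<and> h \<le> 1 \<and> \<bar>h * rbar\<bar> \<le> 1/2 \<and>
      energy S W epsbar rbar h (Gy h) (n h) (Gn h) \<le> ennreal c"
    using eventually_small_scale energy_le by eventually_elim auto
  show ?thesis
  proof (intro conjI Limsup_lt_topI[OF eventually_mono[OF small] \<open>B < \<infinity>\<close>]
      eventually_at_right_0_imp_interval[OF eventually_mono[OF small]])
  qed (auto simp: B_def intro: est(1) order_trans[OF est(2)] order_trans[OF est(3)] order_trans[OF est(4)]
      order_trans[OF est(5)] add_increasing add_increasing2)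
qed

end
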